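(* Let $t$ be a positive integer and let $M$ be a $t$-spike of order $r$. Then $r \ge 2t-1$.
   Context: For a positive integer $t$, a matroid $M$ is a $t$-spike of order $r$ (where $r\ge t$) if there is a partition $(A_1,\ldots,A_r)$ of $E(M)$ into 2-element sets (arms) such that, for every $t$-element subset $J\subseteq\{1,\dots,r\}$, the set $\bigcup_{j\in J}A_j$ is both a circuit and a cocircuit of $M$. *)

theory Defs
  imports Main
begin

definition matroid :: "'a set \<Rightarrow> ('a set \<Rightarrow> bool) \<Rightarrow> bool" where
  "matroid E indep \<longleftrightarrow>
     finite E \<and>
     (\<forall>X. indep X \<longrightarrow> X \<subseteq> E) \<and>
     indep {} \<and>
     (\<forall>X Y. indep X \<and> Y \<subseteq> X \<longrightarrow> indep Y) \<and>
     (\<forall>X Y. indep X \<and> indep Y \<and> card X < card Y \<longrightarrow>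
        (\<exists>y \<in> Y - X. indep (insert y X)))"

definition basis :: "'a set \<Rightarrow> ('a set \<Rightarrow> bool) \<Rightarrow> 'a set \<Rightarrow> bool" where
  "basis E indep B \<longleftrightarrow> indep B \<and> (\<forall>X. indep X \<and> B \<subseteq> X \<longrightarrow> X = B)"

definition circuit :: "'a set \<Rightarrow> ('a set \<Rightarrow> bool) \<Rightarrow> 'a set \<Rightarrow> bool" where
  "circuit E indep C \<longleftrightarrow> C \<subseteq> E \<and> \<not> indep C \<and> (\<forall>X. X \<subset> C \<longrightarrow> indep X)"

definition dual_indep :: "'a set \<Rightarrow> ('a set \<Rightarrow> bool) \<Rightarrow> 'a set \<Rightarrow> bool" where
  "dual_indep E indep X \<longleftrightarrow> X \<subseteq> E \<and> (\<exists>B. basis E indep B \<and> X \<inter> B = {})"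

definition cocircuit :: "'a set \<Rightarrow> ('a set \<Rightarrow> bool) \<Rightarrow> 'a set \<Rightarrow> bool" where
  "cocircuit E indep C \<longleftrightarrow> circuit E (dual_indep E indep) C"

definition is_spike :: "nat \<Rightarrow> nat \<Rightarrow> 'a set \<Rightarrow> ('a set \<Rightarrow> bool) \<Rightarrow> bool" where
  "is_spike t r E indep \<longleftrightarrow> t \<le> r \<and>
     (\<exists>A :: nat \<Rightarrow> 'a set.
        (\<forall>i < r. card (A i) = 2) \<and>
        (\<forall>i < r. \<forall>j < r. i \<noteq> j \<longrightarrow> A i \<inter> A j = {}) \<and>
        (\<Union>i \<in> {0..<r}. A i) = E \<and>
        (\<forall>J. J \<subseteq> {0..<r} \<and> card J = t \<longrightarrow>
            circuit E indep (\<Union>j \<in> J. A j) \<and> cocircuit E indep (\<Union>j \<in> J. A j)))"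

end

theory Submission
  imports Defs
begin

text \<open>Let \<open>C\<close> be a circuit that is also a cocircuit and \<open>e \<in> C\<close>. Then \<open>C - {e}\<close> is
  independent and coindependent, so it avoids some basis \<open>B\<close>, which lies in \<open>(E - C) \<union> {e}\<close>.
  Comparing sizes, \<open>|C| - 1 \<le> |B| \<le> |E| - |C| + 1\<close>. For the union \<open>C\<close> of \<open>t\<close> arms of a
  \<open>t\<close>-spike of order \<open>r\<close> this reads \<open>2t - 1 \<le> 2r - 2t + 1\<close>.\<close>

lemma card_UN_disjoint_doubletons:
  assumes "finite J"
    and "\<And>i. i \<in> J \<Longrightarrow> card (A i) = 2"
    and "\<And>i j. i \<in> J \<Longrightarrow> j \<in> J \<Longrightarrow> i \<noteq> j \<Longrightarrow> A i \<inter> A j = {}"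
  shows "card (\<Union>i\<in>J. A i) = 2 * card J"
proof -
  have "card (\<Union>i\<in>J. A i) = (\<Sum>i\<in>J. card (A i))"
    using assms by (intro card_UN_disjoint) (auto intro: card_ge_0_finite)
  also have "\<dots> = 2 * card J"
    using assms(2) by simp
  finally show ?thesis .
qed

lemma matroid_indep_card_le_basis:
  assumes "matroid E indep" and "basis E indep B" and "indep X"
  shows "card X \<le> card B"
proof (rule ccontr)
  assume "\<not> card X \<le> card B"
  moreover have "indep B"
    using assms(2) unfolding basis_def by blast
  ultimately obtain y where "y \<in> X - B" and "indep (insert y B)"
    using assms(1,3) unfolding matroid_def by (metis not_le DiffE)
  then show False
    using assms(2) unfolding basis_def by blast
qed

lemma matroid_circuit_nonempty:
  assumes "matroid E indep" and "circuit E indep C"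
  shows "C \<noteq> {}"
  using assms unfolding matroid_def circuit_def by blast

lemma matroid_circuit_cocircuit_card:
  assumes M: "matroid E indep"
    and circ: "circuit E indep C" and cocirc: "cocircuit E indep C"
  shows "2 * card C \<le> card E + 2"
proof -
  have "finite E" and CE: "C \<subseteq> E"
    using M circ unfolding matroid_def circuit_def by auto
  then have "finite C"
    by (rule finite_subset[rotated])
  obtain e where "e \<in> C"
    using matroid_circuit_nonempty[OF M circ] by blast
  then have proper: "C - {e} \<subset> C"
    by blast
  have "indep (C - {e})"
    using circ proper unfolding circuit_def by blast
  moreover have "dual_indep E indep (C - {e})"
    using cocirc proper unfolding cocircuit_def circuit_def by blast
  then obtain B where B: "basis E indep B" and "(C - {e}) \<inter> B = {}"
    unfolding dual_indep_def by blast
  ultimately have lower: "card (C - {e}) \<le> card B"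
    using matroid_indep_card_le_basis[OF M] by blast
  have "B \<subseteq> E"
    using B M unfolding basis_def matroid_def by blast
  then have "B \<subseteq> insert e (E - C)"
    using \<open>(C - {e}) \<inter> B = {}\<close> by blast
  then have "card B \<le> card (insert e (E - C))"
    using \<open>finite E\<close> by (intro card_mono) auto
  also have "\<dots> \<le> Suc (card (E - C))"
    using \<open>finite E\<close> by (simp add: card_insert_if)
  also have "card (E - C) = card E - card C"
    using \<open>finite C\<close> CE by (rule card_Diff_subset)
  finally have upper: "card B \<le> Suc (card E - card C)" .
  have "card (C - {e}) = card C - 1" and "card C \<le> card E"
    using \<open>e \<in> C\<close> \<open>finite E\<close> CE by (auto intro: card_mono)
  with lower upper show ?thesis
    by linarith
qed

lemma spike_circuit_cocircuit:
  assumes "is_spike t r E indep"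
  shows "card E = 2 * r"
    and "\<exists>C. circuit E indep C \<and> cocircuit E indep C \<and> card C = 2 * t"
proof -
  obtain A :: "nat \<Rightarrow> 'a set" where
    arms: "\<forall>i < r. card (A i) = 2" and
    disj: "\<forall>i < r. \<forall>j < r. i \<noteq> j \<longrightarrow> A i \<inter> A j = {}" and
    ground: "(\<Union>i \<in> {0..<r}. A i) = E" and
    unions: "\<forall>J. J \<subseteq> {0..<r} \<and> card J = t \<longrightarrow>
      circuit E indep (\<Union>j \<in> J. A j) \<and> cocircuit E indep (\<Union>j \<in> J. A j)"
    using assms unfolding is_spike_def by blast
  have "t \<le> r"
    using assms unfolding is_spike_def by blast
  have card_arms: "card (\<Union>i\<in>J. A i) = 2 * card J" if "J \<subseteq> {0..<r}" for J
  proof (rule card_UN_disjoint_doubletons)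
    show "finite J"
      using that by (rule finite_subset) simp
  qed (use that arms disj in \<open>auto simp: subset_iff\<close>)
  show "card E = 2 * r"
    using card_arms[of "{0..<r}"] ground by simp
  show "\<exists>C. circuit E indep C \<and> cocircuit E indep C \<and> card C = 2 * t"
  proof (intro exI conjI)
    have "{0..<t} \<subseteq> {0..<r}"
      using \<open>t \<le> r\<close> by simp
    then show "circuit E indep (\<Union>j\<in>{0..<t}. A j)" "cocircuit E indep (\<Union>j\<in>{0..<t}. A j)"
        "card (\<Union>j\<in>{0..<t}. A j) = 2 * t"
      using unions card_arms by auto
  qed
qed

theorem lemma6p1:
  fixes E :: "'a set" and indep :: "'a set \<Rightarrow> bool" and t r :: nat
  assumes "0 < t"
    and "matroid E indep"
    and "is_spike t r E indep"
  shows "2 * t - 1 \<le> r"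
proof -
  obtain C where "circuit E indep C" and "cocircuit E indep C" and "card C = 2 * t"
    using spike_circuit_cocircuit(2)[OF assms(3)] by blast
  then have "2 * (2 * t) \<le> 2 * r + 2"
    using matroid_circuit_cocircuit_card[OF assms(2)] spike_circuit_cocircuit(1)[OF assms(3)]
    by metis
  then show ?thesis
    by linarith
qed

end
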